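(* Let $(M,g)$ be a continuous spacetime, let $p\in M$ and let $(\varphi,U)$ be a cylindrical chart around $p$. Let $\gamma\colon[a,b]\to U$ be an absolutely continuous future directed causal curve. Then there is a strictly increasing, absolutely continuous $\phi\colon[c,d]\to[a,b]$ such that the reparametrisation $\tilde\gamma=\gamma\circ\phi$ satisfies, in the chart $\varphi$, $$\tilde\gamma(t)=(t,\vec\gamma(t))\quad\text{for all } t\in[c,d].$$
   Context: A continuous spacetime $(M,g)$ consists of a smooth, connected, second countable Hausdorff manifold $M$ with a continuous, time-oriented Lorentzian metric $g$. Absolutely continuous causal curves: an absolutely continuous curve $\gamma$ (absolutely continuous in charts) is causal if $g(\dot\gamma,\dot\gamma)\le 0$ and $\dot\gamma\ne 0$ almost everywhere. It is future directed if $\dot\gamma$ lies in the future light cone almost everywhere. Wider cones: for Lorentzian metrics one writes $g_1\prec g_2$ if every nonzero $X$ with $g_1(X,X)\le0$ satisfies $g_2(X,X)<0$. Cylindrical charts: for $C>0$ let $\eta_C=-C\,dt^2+\sum_{i=1}^n (dx^i)^2$ on $\mathbb{R}^{n+1}$. A chart $(\varphi=(t,x^1,\dots,x^n),U)$ centred at $p$ is cylindrical if: - $U$ is relatively compact; - $\varphi(U)=L\times V$, where $L\ni 0$ is an interval and $0\in V\subseteq\mathbb{R}^n$ is open; - $(\varphi_*g)(0)=\eta_1$; - there is $C>1$ with $\eta_{C^{-1}}\prec\varphi_*g\prec\eta_C$ on $L\times V$. *)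

theory Defs
  imports "HOL-Analysis.Analysis"
begin

text \<open>Coordinate points / tangent vectors of the chart image are elements of
  real \<times> real^'n, written (t, x).\<close>

type_synonym ('n) cvec = "real \<times> (real ^ ('n::finite))"

definition absolutely_continuous_on ::
  "real set \<Rightarrow> (real \<Rightarrow> 'b::real_normed_vector) \<Rightarrow> bool" where
  "absolutely_continuous_on S f \<longleftrightarrow>
    (\<forall>e>0. \<exists>d>0. \<forall>(n::nat) (u::nat \<Rightarrow> real) (v::nat \<Rightarrow> real).
       (\<forall>i<n. u i \<le> v i \<and> {u i..v i} \<subseteq> S) \<and>
       (\<forall>i<n. \<forall>j<n. i \<noteq> j \<longrightarrow> v i \<le> u j \<or> v j \<le> u i) \<and>
       (\<Sum>i<n. v i - u i) < d
       \<longrightarrow> (\<Sum>i<n. norm (f (v i) - f (u i))) < e)"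

definition eta :: "real \<Rightarrow> ('n::finite) cvec \<Rightarrow> ('n::finite) cvec \<Rightarrow> real" where
  "eta C X Y = - C * fst X * fst Y + snd X \<bullet> snd Y"

definition lorentzian_form :: "('a::real_vector \<Rightarrow> 'a \<Rightarrow> real) \<Rightarrow> bool" where
  "lorentzian_form B \<longleftrightarrow> bilinear B \<and> (\<forall>X Y. B X Y = B Y X) \<and>
     (\<exists>T. B T T < 0 \<and> (\<forall>X. X \<noteq> 0 \<and> B T X = 0 \<longrightarrow> B X X > 0))"

definition wider_cones :: "('a::real_vector \<Rightarrow> 'a \<Rightarrow> real) \<Rightarrow> ('a \<Rightarrow> 'a \<Rightarrow> real) \<Rightarrow> bool" where
  "wider_cones g1 g2 \<longleftrightarrow> (\<forall>X. X \<noteq> 0 \<and> g1 X X \<le> 0 \<longrightarrow> g2 X X < 0)"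

text \<open>Future directed causal vector at a point, w.r.t. metric form B and the
  time orientation vector T at that point.\<close>
definition future_causal :: "('a::real_vector \<Rightarrow> 'a \<Rightarrow> real) \<Rightarrow> 'a \<Rightarrow> 'a \<Rightarrow> bool" where
  "future_causal B T X \<longleftrightarrow> X \<noteq> 0 \<and> B X X \<le> 0 \<and> B T X < 0"

text \<open>Cylindrical chart centred at p, in terms of the coordinate expression G = phi_* g
  of the metric on phi(U) = L \<times> V.\<close>
definition cylindrical_chart ::
  "'m::topological_space set \<Rightarrow> ('m \<Rightarrow> ('n::finite) cvec) \<Rightarrow> (('n::finite) cvec \<Rightarrow> ('n::finite) cvec \<Rightarrow> ('n::finite) cvec \<Rightarrow> real)
    \<Rightarrow> 'm \<Rightarrow> real set \<Rightarrow> (real ^ 'n) set \<Rightarrow> bool" where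
  "cylindrical_chart U \<phi> G p L V \<longleftrightarrow>
     open U \<and> p \<in> U \<and> compact (closure U) \<and>
     (\<exists>\<psi>. homeomorphism U (L \<times> V) \<phi> \<psi>) \<and>
     is_interval L \<and> open L \<and> 0 \<in> L \<and> open V \<and> 0 \<in> V \<and>
     \<phi> p = (0, 0) \<and>
     G (0, 0) = eta 1 \<and>
     (\<exists>C>1. \<forall>q\<in>L \<times> V. wider_cones (eta (inverse C)) (G q) \<and> wider_cones (G q) (eta C))"

end

theory Submission
  imports Defs
begin

text \<open>In a cylindrical chart the causal vectors of the metric are timelike for eta_C, so their
  dt-component cannot vanish; since the t-axis is future directed, every future directed causal
  vector has positive dt-component. Hence the time coordinate f of the curve is absolutely
  continuous with f' > 0 almost everywhere. Almost every point then lies in one of the closed sets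
  on which the difference quotients of f are at least some \<kappa> > 0; on these sets f increases at
  rate \<kappa>, and on their complements, of small measure, absolute continuity makes the variation
  small. This shows that f is strictly increasing and that its inverse is absolutely continuous;
  reparametrising the curve by this inverse makes the time coordinate the parameter.\<close>

section \<open>Causal vectors in a cylindrical chart\<close>

lemma bilinear_square_combination:
  fixes B :: "'a::real_vector \<Rightarrow> 'a \<Rightarrow> real"
  assumes bil: "bilinear B" and sym: "B Y X = B X Y"
  shows "B (a *\<^sub>R X + b *\<^sub>R Y) (a *\<^sub>R X + b *\<^sub>R Y) = a\<^sup>2 * B X X + 2 * a * b * B X Y + b\<^sup>2 * B Y Y"
  using sym by (simp add: bilinear_radd[OF bil] bilinear_rmul[OF bil] bilinear_ladd[OF bil]
      bilinear_lmul[OF bil] power2_eq_square algebra_simps)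

lemma lorentzian_form_orthogonal_pos:
  fixes B :: "'a::real_vector \<Rightarrow> 'a \<Rightarrow> real"
  assumes lor: "lorentzian_form B" and T: "B T T < 0" and XT: "B T X = 0" and "X \<noteq> 0"
  shows "B X X > 0"
proof (rule ccontr)
  assume X: "\<not> B X X > 0"
  from lor obtain T0 where bil: "bilinear B" and sym: "\<And>X Y. B X Y = B Y X"
    and "B T0 T0 < 0" and pos: "\<And>Z. Z \<noteq> 0 \<Longrightarrow> B T0 Z = 0 \<Longrightarrow> B Z Z > 0"
    unfolding lorentzian_form_def by blast
  have "T \<noteq> 0"
    using T by (auto simp: bilinear_lzero[OF bil])
  then have T0T: "B T0 T \<noteq> 0"
    using pos T by force
  \<comment> \<open>A combination of T and X that is orthogonal to the reference vector T0, hence spacelike unless zero.\<close>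
  define Z where "Z = B T0 X *\<^sub>R T + (- B T0 T) *\<^sub>R X"
  have "B T0 Z = 0"
    unfolding Z_def by (simp add: bilinear_rsub[OF bil] bilinear_rmul[OF bil])
  moreover have "Z \<noteq> 0"
  proof
    assume "Z = 0"
    then have "B T Z = 0"
      by (simp add: bilinear_rzero[OF bil])
    then have "B T0 X = 0"
      using T XT unfolding Z_def by (simp add: bilinear_rsub[OF bil] bilinear_rmul[OF bil])
    with \<open>Z = 0\<close> T0T \<open>X \<noteq> 0\<close> show False
      unfolding Z_def by simp
  qed
  moreover have "B Z Z = (B T0 X)\<^sup>2 * B T T + 2 * B T0 X * (- B T0 T) * B T X + (- B T0 T)\<^sup>2 * B X X"
    unfolding Z_def by (rule bilinear_square_combination[OF bil sym])
  moreover have "(B T0 X)\<^sup>2 * B T T + (B T0 T)\<^sup>2 * B X X \<le> 0"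
    using T X by (intro add_nonpos_nonpos mult_nonneg_nonpos) auto
  ultimately show False
    using pos XT by fastforce
qed

lemma lorentzian_form_same_cone_nonpos:
  fixes B :: "'a::real_vector \<Rightarrow> 'a \<Rightarrow> real"
  assumes lor: "lorentzian_form B" and T: "B T T < 0"
    and X: "B X X \<le> 0" "B T X < 0" and Y: "B Y Y \<le> 0" "B T Y < 0"
  shows "B X Y \<le> 0"
proof -
  from lor have bil: "bilinear B" and sym: "\<And>X Y. B X Y = B Y X"
    unfolding lorentzian_form_def by blast+
  define Z where "Z = B T Y *\<^sub>R X + (- B T X) *\<^sub>R Y"
  have ZT: "B T Z = 0"
    unfolding Z_def by (simp add: bilinear_rsub[OF bil] bilinear_rmul[OF bil])
  then have "B Z Z \<ge> 0"
    using lorentzian_form_orthogonal_pos[OF lor T ZT]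
    by (cases "Z = 0") (auto simp: bilinear_rzero[OF bil] less_imp_le)
  moreover have "B Z Z = (B T Y)\<^sup>2 * B X X + 2 * B T Y * (- B T X) * B X Y + (- B T X)\<^sup>2 * B Y Y"
    unfolding Z_def by (rule bilinear_square_combination[OF bil sym])
  moreover have "(B T Y)\<^sup>2 * B X X + (B T X)\<^sup>2 * B Y Y \<le> 0"
    using X Y by (intro add_nonpos_nonpos mult_nonneg_nonpos) auto
  ultimately have "(B T X * B T Y) * B X Y \<le> 0"
    by (simp add: algebra_simps)
  moreover have "B T X * B T Y > 0"
    using X Y by (simp add: mult_neg_neg)
  ultimately show ?thesis
    using mult_le_cancel_left_pos[of "B T X * B T Y" "B X Y" 0] by simp
qed

lemma future_causal_fst_pos:
  fixes B :: "'n::finite cvec \<Rightarrow> 'n cvec \<Rightarrow> real"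
  assumes lor: "lorentzian_form B" and T: "B T T < 0"
    and time_axis: "B (1, 0) (1, 0) < 0" "B T (1, 0) < 0"
    and cones: "wider_cones B (eta C)" and v: "future_causal B T v"
  shows "fst v > 0"
proof (rule ccontr)
  assume "\<not> fst v > 0"
  from lor have bil: "bilinear B" and sym: "\<And>X Y. B X Y = B Y X"
    unfolding lorentzian_form_def by blast+
  have vv: "v \<noteq> 0" "B v v \<le> 0" "B T v < 0"
    using v unfolding future_causal_def by auto
  \<comment> \<open>Removing the time component of v would leave a nonzero causal vector of the form (0, x).\<close>
  define w where "w = 1 *\<^sub>R v + (- fst v) *\<^sub>R (1, 0)"
  have "fst w = 0"
    unfolding w_def by simp
  have "B v (1, 0) \<le> 0"
    using lorentzian_form_same_cone_nonpos[OF lor T vv(2,3)] time_axis by simp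
  moreover have "B w w = 1\<^sup>2 * B v v + 2 * 1 * (- fst v) * B v (1, 0) + (- fst v)\<^sup>2 * B (1, 0) (1, 0)"
    unfolding w_def by (rule bilinear_square_combination[OF bil sym])
  moreover have "(- fst v) * B v (1, 0) \<le> 0" "(- fst v)\<^sup>2 * B (1, 0) (1, 0) \<le> 0"
    using \<open>B v (1, 0) \<le> 0\<close> time_axis \<open>\<not> fst v > 0\<close> by (auto intro: mult_nonneg_nonpos mult_nonpos_nonpos)
  ultimately have "B w w \<le> 0"
    using vv(2) by simp
  moreover have "w \<noteq> 0"
  proof
    assume "w = 0"
    then have "v = fst v *\<^sub>R (1, 0)"
      unfolding w_def by (simp flip: eq_neg_iff_add_eq_0)
    then have "B T v = fst v * B T (1, 0)"
      using bilinear_rmul[OF bil, of T "fst v" "(1, 0)"] by simp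
    with vv(3) time_axis \<open>\<not> fst v > 0\<close> show False
      using mult_nonpos_nonpos[of "fst v" "B T (1, 0)"] by simp
  qed
  ultimately have "eta C w w < 0"
    using cones unfolding wider_cones_def by blast
  with \<open>fst w = 0\<close> show False
    unfolding eta_def using inner_ge_zero[of "snd w"] by simp
qed

lemma cylindrical_chart_future_causal_fst_pos:
  fixes G :: "'n::finite cvec \<Rightarrow> 'n cvec \<Rightarrow> 'n cvec \<Rightarrow> real"
  assumes cyl: "cylindrical_chart U \<phi> G p L V" and "q \<in> L \<times> V"
    and "lorentzian_form (G q)" and "G q \<tau> \<tau> < 0" and "G q \<tau> (1, 0) < 0"
    and "future_causal (G q) \<tau> v"
  shows "fst v > 0"
proof -
  obtain C where "C > 1" and cones: "wider_cones (eta (inverse C)) (G q)" "wider_cones (G q) (eta C)"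
    using cyl \<open>q \<in> L \<times> V\<close> unfolding cylindrical_chart_def by blast
  have "eta (inverse C) (1, 0) (1, 0) \<le> 0"
    using \<open>C > 1\<close> by (simp add: eta_def)
  moreover have "(1, 0) \<noteq> (0 :: 'n cvec)"
    by (simp add: zero_prod_def)
  ultimately have "G q (1, 0) (1, 0) < 0"
    using cones(1) unfolding wider_cones_def by blast
  then show ?thesis
    using future_causal_fst_pos[OF assms(3,4)] cones(2) assms(5,6) by blast
qed

section \<open>Non-overlapping interval families and absolute continuity\<close>

definition nonoverlapping_intervals :: "real set \<Rightarrow> nat \<Rightarrow> (nat \<Rightarrow> real) \<Rightarrow> (nat \<Rightarrow> real) \<Rightarrow> bool" where
  "nonoverlapping_intervals S n u v \<longleftrightarrow>
     (\<forall>i<n. u i \<le> v i \<and> {u i..v i} \<subseteq> S) \<and> (\<forall>i<n. \<forall>j<n. i \<noteq> j \<longrightarrow> v i \<le> u j \<or> v j \<le> u i)"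

lemma absolutely_continuous_on_iff:
  "absolutely_continuous_on S f \<longleftrightarrow>
     (\<forall>e>0. \<exists>d>0. \<forall>n u v. nonoverlapping_intervals S n u v \<and> (\<Sum>i<n. v i - u i) < d \<longrightarrow>
        (\<Sum>i<n. norm (f (v i) - f (u i))) < e)"
  unfolding absolutely_continuous_on_def nonoverlapping_intervals_def by (simp only: conj_assoc)

lemma absolutely_continuous_onE:
  assumes "absolutely_continuous_on S f" and "e > 0"
  obtains d where "d > 0"
    and "\<And>n u v. nonoverlapping_intervals S n u v \<Longrightarrow> (\<Sum>i<n. v i - u i) < d \<Longrightarrow>
           (\<Sum>i<n. norm (f (v i) - f (u i))) < e"
  using assms(1)[unfolded absolutely_continuous_on_iff, rule_format, OF assms(2)] that by blast

lemma nonoverlapping_intervals_bounds: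
  assumes "nonoverlapping_intervals {x..y} n u v" and "i < n"
  shows "x \<le> u i" "u i \<le> v i" "v i \<le> y"
  using assms unfolding nonoverlapping_intervals_def by (auto dest!: spec[of _ i])

lemma nonoverlapping_intervals_mem:
  assumes "nonoverlapping_intervals S n u v" and "i < n"
  shows "u i \<in> S" "v i \<in> S"
  using assms unfolding nonoverlapping_intervals_def by (meson atLeastAtMost_iff order_refl subsetD)+

lemma nonoverlapping_intervals_subset:
  "nonoverlapping_intervals S n u v \<Longrightarrow> S \<subseteq> T \<Longrightarrow> nonoverlapping_intervals T n u v"
  unfolding nonoverlapping_intervals_def by blast

lemma absolutely_continuous_on_imp_continuous_on:
  fixes f :: "real \<Rightarrow> 'a::real_normed_vector"
  assumes "absolutely_continuous_on {a..b} f"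
  shows "continuous_on {a..b} f"
  unfolding continuous_on_iff
proof (intro ballI allI impI)
  fix x e :: real
  assume x: "x \<in> {a..b}" and "e > 0"
  then obtain d where "d > 0" and small: "\<And>n u v. nonoverlapping_intervals {a..b} n u v \<Longrightarrow>
      (\<Sum>i<n. v i - u i) < d \<Longrightarrow> (\<Sum>i<n. norm (f (v i) - f (u i))) < e"
    using absolutely_continuous_onE[OF assms] by blast
  have "dist (f y) (f x) < e" if y: "y \<in> {a..b}" and "dist y x < d" for y
  proof -
    have "nonoverlapping_intervals {a..b} 1 (\<lambda>_. min x y) (\<lambda>_. max x y)"
      using x y unfolding nonoverlapping_intervals_def by auto
    moreover have "max x y - min x y < d"
      using \<open>dist y x < d\<close> by (auto simp: dist_real_def)
    ultimately have "norm (f (max x y) - f (min x y)) < e"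
      using small by fastforce
    then show ?thesis
      by (cases "x \<le> y") (auto simp: dist_norm norm_minus_commute max_def min_def)
  qed
  with \<open>d > 0\<close> show "\<exists>d>0. \<forall>y\<in>{a..b}. dist y x < d \<longrightarrow> dist (f y) (f x) < e"
    by blast
qed

lemma absolutely_continuous_on_dominated:
  assumes "absolutely_continuous_on S h"
    and dom: "\<And>x y. x \<in> S \<Longrightarrow> y \<in> S \<Longrightarrow> norm (g x - g y) \<le> norm (h x - h y)"
  shows "absolutely_continuous_on S g"
  unfolding absolutely_continuous_on_iff
proof (intro allI impI)
  fix e :: real
  assume "e > 0"
  then obtain d where "d > 0" and small: "\<And>n u v. nonoverlapping_intervals S n u v \<Longrightarrow>
      (\<Sum>i<n. v i - u i) < d \<Longrightarrow> (\<Sum>i<n. norm (h (v i) - h (u i))) < e"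
    using absolutely_continuous_onE[OF assms(1)] by blast
  have "(\<Sum>i<n. norm (g (v i) - g (u i))) < e"
    if uv: "nonoverlapping_intervals S n u v" "(\<Sum>i<n. v i - u i) < d" for n u v
  proof -
    have "(\<Sum>i<n. norm (g (v i) - g (u i))) \<le> (\<Sum>i<n. norm (h (v i) - h (u i)))"
      using uv(1) by (intro sum_mono dom) (fastforce simp: nonoverlapping_intervals_def)+
    also have "\<dots> < e"
      using small[OF uv] .
    finally show ?thesis .
  qed
  with \<open>d > 0\<close> show "\<exists>d>0. \<forall>n u v. nonoverlapping_intervals S n u v \<and> (\<Sum>i<n. v i - u i) < d \<longrightarrow>
      (\<Sum>i<n. norm (g (v i) - g (u i))) < e"
    by blast
qed

definition append_seq :: "nat \<Rightarrow> (nat \<Rightarrow> 'a) \<Rightarrow> (nat \<Rightarrow> 'a) \<Rightarrow> nat \<Rightarrow> 'a" where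
  "append_seq m u u' i = (if i < m then u i else u' (i - m))"

lemma sum_append_seq:
  "(\<Sum>i<m + n. h (append_seq m u u' i) (append_seq m v v' i)) =
     (\<Sum>i<m. h (u i) (v i)) + (\<Sum>i<n. h (u' i) (v' i))"
proof -
  have "(\<Sum>i<m + n. h (append_seq m u u' i) (append_seq m v v' i)) =
      (\<Sum>i<m. h (append_seq m u u' i) (append_seq m v v' i)) +
      (\<Sum>i<n. h (append_seq m u u' (m + i)) (append_seq m v v' (m + i)))"
    by (induction n) (auto simp: add.assoc)
  then show ?thesis
    by (simp add: append_seq_def)
qed

lemma nonoverlapping_intervals_append:
  assumes I: "nonoverlapping_intervals {x..z} m u v" and J: "nonoverlapping_intervals {z..y} n u' v'"
    and "x \<le> z" "z \<le> y"
  shows "nonoverlapping_intervals {x..y} (m + n) (append_seq m u u') (append_seq m v v')"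
proof -
  have left: "x \<le> u i" "u i \<le> v i" "v i \<le> z" if "i < m" for i
    using nonoverlapping_intervals_bounds[OF I that] .
  have right: "z \<le> u' i" "u' i \<le> v' i" "v' i \<le> y" if "i < n" for i
    using nonoverlapping_intervals_bounds[OF J that] .
  have split: "i < m \<or> (\<not> i < m \<and> i - m < n)" if "i < m + n" for i
    using that by linarith
  have "append_seq m u u' i \<le> append_seq m v v' i \<and>
      {append_seq m u u' i..append_seq m v v' i} \<subseteq> {x..y}" if "i < m + n" for i
    using split[OF that]
  proof (elim disjE conjE)
    assume "i < m"
    with left[OF this] \<open>z \<le> y\<close> show ?thesis
      by (auto simp: append_seq_def)
  next
    assume "\<not> i < m" "i - m < n"
    with right[OF this(2)] \<open>x \<le> z\<close> show ?thesis
      by (auto simp: append_seq_def)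
  qed
  moreover have "append_seq m v v' i \<le> append_seq m u u' j \<or> append_seq m v v' j \<le> append_seq m u u' i"
    if "i < m + n" "j < m + n" "i \<noteq> j" for i j
    using split[OF that(1)] split[OF that(2)]
  proof (elim disjE conjE)
    assume "i < m" "j < m"
    with I \<open>i \<noteq> j\<close> show ?thesis
      unfolding nonoverlapping_intervals_def append_seq_def by simp
  next
    assume "\<not> i < m" "i - m < n" "\<not> j < m" "j - m < n"
    with J \<open>i \<noteq> j\<close> show ?thesis
      unfolding nonoverlapping_intervals_def append_seq_def by auto
  next
    assume "i < m" "\<not> j < m" "j - m < n"
    with left(3)[of i] right(1)[of "j - m"] show ?thesis
      unfolding append_seq_def by simp
  next
    assume "\<not> i < m" "i - m < n" "j < m"
    with left(3)[of j] right(1)[of "i - m"] show ?thesis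
      unfolding append_seq_def by simp
  qed
  ultimately show ?thesis
    unfolding nonoverlapping_intervals_def by blast
qed

lemma nonoverlapping_intervals_mono_image:
  assumes I: "nonoverlapping_intervals S n u v" and g: "mono_on S g" "g ` S \<subseteq> {a..b}"
  shows "nonoverlapping_intervals {a..b} n (g \<circ> u) (g \<circ> v)"
proof -
  have uv: "u i \<in> S" "v i \<in> S" "u i \<le> v i" if "i < n" for i
    using nonoverlapping_intervals_mem[OF I that] I that unfolding nonoverlapping_intervals_def by auto
  show ?thesis
    unfolding nonoverlapping_intervals_def comp_def
  proof (intro conjI allI impI)
    fix i
    assume "i < n"
    then show "g (u i) \<le> g (v i)" "{g (u i)..g (v i)} \<subseteq> {a..b}"
      using uv[OF \<open>i < n\<close>] g by (auto intro: mono_onD)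
  next
    fix i j
    assume "i < n" "j < n" "i \<noteq> j"
    then have "v i \<le> u j \<or> v j \<le> u i"
      using I unfolding nonoverlapping_intervals_def by blast
    then show "g (v i) \<le> g (u j) \<or> g (v j) \<le> g (u i)"
      using uv[OF \<open>i < n\<close>] uv[OF \<open>j < n\<close>] g(1) by (auto intro: mono_onD)
  qed
qed

lemma measure_Icc_Diff:
  assumes "E \<in> sets lebesgue" and "x \<le> y"
  shows "measure lebesgue ({x..y} - E) = y - x - measure lebesgue (E \<inter> {x..y})"
proof -
  have "{x..y} \<in> lmeasurable"
    by simp
  then have "measure lebesgue ({x..y} - E \<inter> {x..y}) = measure lebesgue {x..y} - measure lebesgue (E \<inter> {x..y})"
    using assms by (intro measure_Diff) auto
  moreover have "{x..y} - E = {x..y} - E \<inter> {x..y}"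
    by blast
  ultimately show ?thesis
    using assms(2) by simp
qed

lemma sum_measure_nonoverlapping_intervals_Diff:
  assumes I: "nonoverlapping_intervals S n u v" and "E \<in> sets lebesgue" and "S \<in> lmeasurable"
  shows "(\<Sum>i<n. measure lebesgue ({u i..v i} - E)) \<le> measure lebesgue (S - E)"
proof -
  define F where "F i = {u i..v i} - E" for i
  have F: "F i \<in> lmeasurable" for i
    unfolding F_def using \<open>E \<in> sets lebesgue\<close> by (intro fmeasurable_Diff) auto
  have "negligible (F i \<inter> F j)" if "i < n" "j < n" "i \<noteq> j" for i j
  proof -
    have "v i \<le> u j \<or> v j \<le> u i"
      using I that unfolding nonoverlapping_intervals_def by blast
    then have "F i \<inter> F j \<subseteq> {v i} \<or> F i \<inter> F j \<subseteq> {v j}"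
      unfolding F_def by auto
    then show ?thesis
      using negligible_sing negligible_subset by blast
  qed
  then have "(\<Sum>i<n. measure lebesgue (F i)) = measure lebesgue (\<Union>i<n. F i)"
    using F by (intro measure_negligible_finite_Union_image[symmetric]) (auto simp: pairwise_def)
  also have "\<dots> \<le> measure lebesgue (S - E)"
    using I F \<open>E \<in> sets lebesgue\<close> \<open>S \<in> lmeasurable\<close>
    by (intro measure_mono_fmeasurable fmeasurable_Diff)
      (auto simp: F_def nonoverlapping_intervals_def intro: fmeasurableD)
  finally show ?thesis
    unfolding F_def .
qed

section \<open>Growth sets\<close>

text \<open>The growth set collects the points from which all difference quotients of f at scale below \<kappa>
  are at least \<kappa>; the inequality is written without division so that the set is visibly closed.\<close>

definition growth_set :: "(real \<Rightarrow> real) \<Rightarrow> real set \<Rightarrow> real \<Rightarrow> real set" where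
  "growth_set f S \<kappa> = {s \<in> S. \<forall>t\<in>S. \<bar>t - s\<bar> < \<kappa> \<longrightarrow> \<kappa> * (t - s)\<^sup>2 \<le> (f t - f s) * (t - s)}"

lemma growth_set_subset: "growth_set f S \<kappa> \<subseteq> S"
  unfolding growth_set_def by blast

lemma growth_set_increment:
  assumes "s \<in> growth_set f S \<kappa>" and "t \<in> S" "s \<le> t" "t - s < \<kappa>"
  shows "\<kappa> * (t - s) \<le> f t - f s"
proof (cases "s = t")
  case False
  with assms have "(\<kappa> * (t - s)) * (t - s) \<le> (f t - f s) * (t - s)"
    unfolding growth_set_def by (simp add: power2_eq_square mult.assoc)
  with False \<open>s \<le> t\<close> show ?thesis
    by (simp add: mult_le_cancel_right)
qed simp

lemma growth_set_antimono:
  assumes "\<kappa>' \<le> \<kappa>"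
  shows "growth_set f S \<kappa> \<subseteq> growth_set f S \<kappa>'"
proof -
  have "\<kappa>' * (t - s)\<^sup>2 \<le> (f t - f s) * (t - s)"
    if "s \<in> growth_set f S \<kappa>" "t \<in> S" "\<bar>t - s\<bar> < \<kappa>'" for s t
  proof -
    have "\<kappa>' * (t - s)\<^sup>2 \<le> \<kappa> * (t - s)\<^sup>2"
      using assms by (simp add: mult_right_mono)
    also have "\<dots> \<le> (f t - f s) * (t - s)"
      using that assms unfolding growth_set_def by auto
    finally show ?thesis .
  qed
  then show ?thesis
    by (auto simp: growth_set_def)
qed

lemma closed_growth_set:
  assumes "closed S" and "continuous_on S f"
  shows "closed (growth_set f S \<kappa>)"
proof -
  define far where "far t = {s. \<not> \<bar>t - s\<bar> < \<kappa>}" for t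
  define grows where "grows t = S \<inter> (\<lambda>s. (f t - f s) * (t - s) - \<kappa> * (t - s)\<^sup>2) -` {0..}" for t
  have "growth_set f S \<kappa> = S \<inter> (\<Inter>t\<in>S. far t \<union> grows t)"
    unfolding growth_set_def far_def grows_def by auto
  moreover have "closed (far t)" for t
  proof -
    have "far t = - ball t \<kappa>"
      by (auto simp: far_def dist_real_def)
    then show ?thesis
      by (simp add: closed_Compl)
  qed
  moreover have "closed (grows t)" for t
    unfolding grows_def using assms by (intro continuous_closed_preimage continuous_intros) auto
  ultimately show ?thesis
    using assms by (simp add: closed_INT closed_Int closed_Un)
qed

lemma lmeasurable_growth_set:
  assumes "continuous_on {a..b} f"
  shows "growth_set f {a..b} \<kappa> \<in> lmeasurable"
proof -
  have "compact (growth_set f {a..b} \<kappa>)"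
    using closed_growth_set[OF _ assms] growth_set_subset
    by (meson bounded_closed_interval bounded_subset closed_real_atLeastAtMost compact_eq_bounded_closed)
  then show ?thesis
    by (rule lmeasurable_compact)
qed

lemma pos_deriv_imp_growth_set:
  fixes f :: "real \<Rightarrow> real"
  assumes "(f has_real_derivative D) (at s within S)" and "D > 0" and "s \<in> S"
  obtains \<kappa> where "\<kappa> > 0" and "s \<in> growth_set f S \<kappa>"
proof -
  obtain d where "d > 0" and d: "\<And>t. t \<in> S \<Longrightarrow> norm (t - s) < d \<Longrightarrow>
      norm (f t - f s - D * (t - s)) \<le> D / 2 * norm (t - s)"
    using assms(1,2) unfolding has_field_derivative_def has_derivative_within_alt
    by (meson half_gt_zero)
  define \<kappa> where "\<kappa> = min d (D / 2)"
  have "\<kappa> * (t - s)\<^sup>2 \<le> (f t - f s) * (t - s)" if "t \<in> S" "\<bar>t - s\<bar> < \<kappa>" for t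
  proof -
    define r where "r = f t - f s - D * (t - s)"
    have "\<bar>r\<bar> \<le> D / 2 * \<bar>t - s\<bar>"
      using d[OF that(1)] that(2) unfolding r_def \<kappa>_def by simp
    then have "\<bar>r * (t - s)\<bar> \<le> D / 2 * \<bar>t - s\<bar> * \<bar>t - s\<bar>"
      unfolding abs_mult by (rule mult_right_mono) simp
    moreover have "D / 2 * \<bar>t - s\<bar> * \<bar>t - s\<bar> = D / 2 * (t - s)\<^sup>2"
      by (simp add: power2_eq_square abs_mult_self_eq mult.assoc)
    ultimately have "- (r * (t - s)) \<le> D / 2 * (t - s)\<^sup>2"
      using abs_ge_minus_self[of "r * (t - s)"] by linarith
    moreover have "(f t - f s) * (t - s) = D * (t - s)\<^sup>2 + r * (t - s)"
      unfolding r_def by (simp add: power2_eq_square algebra_simps)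
    moreover have "\<kappa> * (t - s)\<^sup>2 \<le> D / 2 * (t - s)\<^sup>2"
      unfolding \<kappa>_def by (intro mult_right_mono) auto
    ultimately show ?thesis
      by linarith
  qed
  then have "s \<in> growth_set f S \<kappa>"
    using assms(3) unfolding growth_set_def by blast
  moreover have "\<kappa> > 0"
    using \<open>d > 0\<close> \<open>D > 0\<close> unfolding \<kappa>_def by simp
  ultimately show ?thesis
    using that by blast
qed

definition grows_ae :: "(real \<Rightarrow> real) \<Rightarrow> real \<Rightarrow> real \<Rightarrow> bool" where
  "grows_ae f a b \<longleftrightarrow> (\<forall>\<eta>>0. \<exists>\<kappa>>0. measure lebesgue ({a..b} - growth_set f {a..b} \<kappa>) < \<eta>)"

lemma grows_aeE:
  assumes "grows_ae f a b" and "\<eta> > 0"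
  obtains \<kappa> where "\<kappa> > 0" and "measure lebesgue ({a..b} - growth_set f {a..b} \<kappa>) < \<eta>"
  using assms unfolding grows_ae_def by blast

lemma measure_compl_growth_set_tendsto_0:
  fixes f :: "real \<Rightarrow> real"
  assumes f: "continuous_on {a..b} f" and "negligible N"
    and cover: "\<And>s. s \<in> {a..b} - N \<Longrightarrow> \<exists>\<kappa>>0. s \<in> growth_set f {a..b} \<kappa>"
  shows "(\<lambda>k. measure lebesgue ({a..b} - growth_set f {a..b} (1 / Suc k))) \<longlonglongrightarrow> 0"
proof -
  define D where "D k = {a..b} - growth_set f {a..b} (1 / Suc k)" for k
  have D: "D k \<in> lmeasurable" for k
    unfolding D_def using lmeasurable_growth_set[OF f] by (intro fmeasurable_Diff) auto
  have "decseq D"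
    unfolding decseq_def D_def
    by (intro allI impI Diff_mono order_refl growth_set_antimono) (simp add: frac_le)
  have "(\<lambda>k. measure lebesgue (D k)) \<longlonglongrightarrow> measure lebesgue (\<Inter>k. D k)"
  proof (rule Lim_measure_decseq[OF _ \<open>decseq D\<close>])
    show "range D \<subseteq> sets lebesgue"
      using D by (auto intro: fmeasurableD)
    show "emeasure lebesgue (D k) \<noteq> \<infinity>" for k
      using fmeasurableD2[OF D[of k]] by simp
  qed
  moreover have "s \<in> N" if s: "s \<in> (\<Inter>k. D k)" for s
  proof (rule ccontr)
    assume "s \<notin> N"
    with s cover obtain \<kappa> where "\<kappa> > 0" "s \<in> growth_set f {a..b} \<kappa>"
      unfolding D_def by blast
    moreover obtain k where "1 / Suc k < \<kappa>"
      using \<open>\<kappa> > 0\<close> reals_Archimedean by (auto simp: inverse_eq_divide)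
    ultimately have "s \<notin> D k"
      using growth_set_antimono[of "1 / Suc k" \<kappa>] unfolding D_def by auto
    with s show False
      by blast
  qed
  then have "measure lebesgue (\<Inter>k. D k) = 0"
    using \<open>negligible N\<close> negligible_imp_measure0 negligible_subset by blast
  ultimately show ?thesis
    unfolding D_def by simp
qed

lemma grows_ae_if_pos_deriv_ae:
  fixes f :: "real \<Rightarrow> real"
  assumes f: "continuous_on {a..b} f" and "negligible N"
    and deriv: "\<And>s. s \<in> {a..b} - N \<Longrightarrow> \<exists>D>0. (f has_real_derivative D) (at s within {a..b})"
  shows "grows_ae f a b"
  unfolding grows_ae_def
proof (intro allI impI)
  fix \<eta> :: real
  assume "\<eta> > 0"
  have "\<exists>\<kappa>>0. s \<in> growth_set f {a..b} \<kappa>" if s: "s \<in> {a..b} - N" for s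
  proof -
    obtain D where "(f has_real_derivative D) (at s within {a..b})" and "D > 0"
      using deriv[OF s] by blast
    then show ?thesis
      using s by (blast elim: pos_deriv_imp_growth_set)
  qed
  with f \<open>negligible N\<close> have "(\<lambda>k. measure lebesgue ({a..b} - growth_set f {a..b} (1 / Suc k))) \<longlonglongrightarrow> 0"
    by (rule measure_compl_growth_set_tendsto_0)
  then have "eventually (\<lambda>k. measure lebesgue ({a..b} - growth_set f {a..b} (1 / Suc k)) < \<eta>) sequentially"
    using \<open>\<eta> > 0\<close> by (rule order_tendstoD(2))
  then obtain k where "measure lebesgue ({a..b} - growth_set f {a..b} (1 / Suc k)) < \<eta>"
    by (auto simp: eventually_sequentially)
  then show "\<exists>\<kappa>>0. measure lebesgue ({a..b} - growth_set f {a..b} \<kappa>) < \<eta>"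
    by (intro exI[of _ "1 / Suc k"]) auto
qed

section \<open>Growth decompositions\<close>

lemma interval_local_to_global:
  fixes P :: "real \<Rightarrow> real \<Rightarrow> bool"
  assumes "\<delta> > 0"
    and local: "\<And>x y. a \<le> x \<Longrightarrow> x \<le> y \<Longrightarrow> y \<le> b \<Longrightarrow> y - x < \<delta> \<Longrightarrow> P x y"
    and trans: "\<And>x y z. a \<le> x \<Longrightarrow> x \<le> y \<Longrightarrow> y \<le> z \<Longrightarrow> z \<le> b \<Longrightarrow> P x y \<Longrightarrow> P y z \<Longrightarrow> P x z"
    and "a \<le> x" "x \<le> y" "y \<le> b"
  shows "P x y"
proof -
  have "\<forall>x. a \<le> x \<longrightarrow> x \<le> y \<longrightarrow> y - x < real n * (\<delta> / 2) \<longrightarrow> P x y" for n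
  proof (induction n)
    case (Suc n)
    show ?case
    proof (intro allI impI)
      fix x
      assume x: "a \<le> x" "x \<le> y" "y - x < real (Suc n) * (\<delta> / 2)"
      show "P x y"
      proof (cases "y - x < \<delta>")
        case True
        with x \<open>y \<le> b\<close> show ?thesis
          by (intro local)
      next
        case False
        with x Suc.IH[rule_format, of "x + \<delta> / 2"] \<open>\<delta> > 0\<close> have "P (x + \<delta> / 2) y"
          by (simp add: algebra_simps)
        moreover have "P x (x + \<delta> / 2)"
          using x False \<open>\<delta> > 0\<close> \<open>y \<le> b\<close> by (intro local) auto
        ultimately show ?thesis
          using x False \<open>\<delta> > 0\<close> \<open>y \<le> b\<close> by (intro trans[of x "x + \<delta> / 2" y]) auto
      qed
    qed
  qed simp
  moreover obtain n where "y - x < real n * (\<delta> / 2)"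
    using ex_less_of_nat_mult[of "\<delta> / 2" "y - x"] \<open>\<delta> > 0\<close> by auto
  ultimately show ?thesis
    using assms by blast
qed

definition growth_decomposition :: "(real \<Rightarrow> real) \<Rightarrow> real set \<Rightarrow> real \<Rightarrow> real \<Rightarrow> real \<Rightarrow> bool" where
  "growth_decomposition f E \<kappa> x y \<longleftrightarrow>
     (\<exists>n u v. nonoverlapping_intervals {x..y} n u v \<and> (\<Sum>i<n. v i - u i) \<le> measure lebesgue ({x..y} - E) \<and>
        \<kappa> * measure lebesgue (E \<inter> {x..y}) + (\<Sum>i<n. f (v i) - f (u i)) \<le> f y - f x)"

lemma growth_decompositionI:
  assumes "nonoverlapping_intervals {x..y} n u v" and "(\<Sum>i<n. v i - u i) \<le> measure lebesgue ({x..y} - E)"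
    and "\<kappa> * measure lebesgue (E \<inter> {x..y}) + (\<Sum>i<n. f (v i) - f (u i)) \<le> f y - f x"
  shows "growth_decomposition f E \<kappa> x y"
  using assms unfolding growth_decomposition_def by blast

lemma growth_decompositionE:
  assumes "growth_decomposition f E \<kappa> x y"
  obtains n u v where "nonoverlapping_intervals {x..y} n u v"
    and "(\<Sum>i<n. v i - u i) \<le> measure lebesgue ({x..y} - E)"
    and "\<kappa> * measure lebesgue (E \<inter> {x..y}) + (\<Sum>i<n. f (v i) - f (u i)) \<le> f y - f x"
  using assms unfolding growth_decomposition_def by blast

lemma growth_decomposition_null:
  assumes "E \<in> sets lebesgue" and "x \<le> y" and "measure lebesgue (E \<inter> {x..y}) = 0"
  shows "growth_decomposition f E \<kappa> x y"
  by (rule growth_decompositionI[where n=1 and u="\<lambda>_. x" and v="\<lambda>_. y"])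
    (use assms measure_Icc_Diff[OF assms(1,2)] in \<open>auto simp: nonoverlapping_intervals_def\<close>)

lemma growth_decomposition_growth:
  assumes "E \<in> sets lebesgue" and "x \<le> y" and "\<kappa> \<ge> 0" and "\<kappa> * (y - x) \<le> f y - f x"
  shows "growth_decomposition f E \<kappa> x y"
proof -
  have "measure lebesgue (E \<inter> {x..y}) \<le> y - x"
    using measure_Icc_Diff[OF assms(1,2)] measure_nonneg[of lebesgue "{x..y} - E"] by linarith
  then have "\<kappa> * measure lebesgue (E \<inter> {x..y}) \<le> \<kappa> * (y - x)"
    using \<open>\<kappa> \<ge> 0\<close> by (rule mult_left_mono)
  with assms(4) show ?thesis
    by (intro growth_decompositionI[where n=0]) (auto simp: nonoverlapping_intervals_def)
qed

lemma growth_decomposition_trans: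
  assumes E: "E \<in> sets lebesgue" and "\<kappa> \<ge> 0" and xz: "x \<le> z" "z \<le> y"
    and "growth_decomposition f E \<kappa> x z" and "growth_decomposition f E \<kappa> z y"
  shows "growth_decomposition f E \<kappa> x y"
proof -
  obtain m u v where I: "nonoverlapping_intervals {x..z} m u v"
    and "(\<Sum>i<m. v i - u i) \<le> measure lebesgue ({x..z} - E)"
    and "\<kappa> * measure lebesgue (E \<inter> {x..z}) + (\<Sum>i<m. f (v i) - f (u i)) \<le> f z - f x"
    using assms(5) by (rule growth_decompositionE)
  moreover obtain n u' v' where J: "nonoverlapping_intervals {z..y} n u' v'"
    and "(\<Sum>i<n. v' i - u' i) \<le> measure lebesgue ({z..y} - E)"
    and "\<kappa> * measure lebesgue (E \<inter> {z..y}) + (\<Sum>i<n. f (v' i) - f (u' i)) \<le> f y - f z"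
    using assms(6) by (rule growth_decompositionE)
  moreover have sub: "measure lebesgue (E \<inter> {x..y}) \<le> measure lebesgue (E \<inter> {x..z}) + measure lebesgue (E \<inter> {z..y})"
  proof -
    have "E \<inter> {x..y} = (E \<inter> {x..z}) \<union> (E \<inter> {z..y})"
      using xz by auto
    then show ?thesis
      using E by (auto intro!: measure_Un_le)
  qed
  moreover have "\<kappa> * measure lebesgue (E \<inter> {x..y}) \<le>
      \<kappa> * measure lebesgue (E \<inter> {x..z}) + \<kappa> * measure lebesgue (E \<inter> {z..y})"
    using mult_left_mono[OF sub \<open>\<kappa> \<ge> 0\<close>] by (simp add: distrib_left)
  ultimately show ?thesis
    using nonoverlapping_intervals_append[OF I J xz] measure_Icc_Diff[OF E] xz
      sum_append_seq[where h="\<lambda>s t. t - s" and m=m and n=n and u=u and u'=u' and v=v and v'=v']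
      sum_append_seq[where h="\<lambda>s t. f t - f s" and m=m and n=n and u=u and u'=u' and v=v and v'=v']
    by (intro growth_decompositionI[where n="m + n"]) auto
qed

lemma growth_decomposition_hull:
  assumes E: "E \<in> sets lebesgue" and "\<kappa> \<ge> 0" and s: "x \<le> s1" "s1 \<le> s2" "s2 \<le> y"
    and hull: "E \<inter> {x..y} \<subseteq> {s1..s2}" and grows: "\<kappa> * (s2 - s1) \<le> f s2 - f s1"
  shows "growth_decomposition f E \<kappa> x y"
proof -
  have "E \<inter> {x..s1} \<subseteq> {s1}" "E \<inter> {s2..y} \<subseteq> {s2}"
    using hull s by auto
  then have "measure lebesgue (E \<inter> {x..s1}) = 0" "measure lebesgue (E \<inter> {s2..y}) = 0"
    by (meson negligible_imp_measure0 negligible_sing negligible_subset)+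
  then have "growth_decomposition f E \<kappa> x s1" "growth_decomposition f E \<kappa> s2 y"
    using E s by (auto intro: growth_decomposition_null)
  moreover have "growth_decomposition f E \<kappa> s1 s2"
    using E s(2) \<open>\<kappa> \<ge> 0\<close> grows by (rule growth_decomposition_growth)
  ultimately show ?thesis
    using growth_decomposition_trans[OF E \<open>\<kappa> \<ge> 0\<close>] s by (meson order_trans)
qed

lemma growth_decomposition_short:
  fixes f :: "real \<Rightarrow> real"
  assumes f: "continuous_on {a..b} f" and "\<kappa> \<ge> 0" and xy: "a \<le> x" "x \<le> y" "y \<le> b" "y - x < \<kappa>"
  shows "growth_decomposition f (growth_set f {a..b} \<kappa>) \<kappa> x y"
proof -
  define E where "E = growth_set f {a..b} \<kappa>"
  have E: "E \<in> sets lebesgue"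
    unfolding E_def using lmeasurable_growth_set[OF f] by (rule fmeasurableD)
  define K where "K = E \<inter> {x..y}"
  have "compact K"
    unfolding K_def E_def using closed_growth_set[OF _ f] growth_set_subset
    by (meson bounded_Int bounded_closed_interval closed_Int closed_atLeastAtMost compact_eq_bounded_closed)
  show ?thesis
  proof (cases "K = {}")
    case True
    then show ?thesis
      using E xy unfolding K_def E_def by (intro growth_decomposition_null) auto
  next
    case False
    have bdd: "bdd_below K" "bdd_above K"
      using compact_imp_bounded[OF \<open>compact K\<close>] by (auto intro: bounded_imp_bdd_below bounded_imp_bdd_above)
    have K: "Inf K \<in> K" "Sup K \<in> K"
      using compact_imp_closed[OF \<open>compact K\<close>] by (simp_all add: closed_contains_Inf closed_contains_Sup False bdd)
    have hull: "K \<subseteq> {Inf K..Sup K}"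
      using bdd by (auto intro: cInf_lower cSup_upper)
    have "Inf K \<in> E" "Sup K \<in> {a..b}" "Inf K \<le> Sup K" "Sup K - Inf K < \<kappa>"
      using K hull xy unfolding K_def E_def by (auto simp: growth_set_def)
    then have "\<kappa> * (Sup K - Inf K) \<le> f (Sup K) - f (Inf K)"
      unfolding E_def by (intro growth_set_increment)
    with E \<open>\<kappa> \<ge> 0\<close> hull K show ?thesis
      unfolding K_def E_def[symmetric] by (intro growth_decomposition_hull) auto
  qed
qed

lemma growth_decomposition_interval:
  fixes f :: "real \<Rightarrow> real"
  assumes f: "continuous_on {a..b} f" and "\<kappa> > 0" and "a \<le> x" "x \<le> y" "y \<le> b"
  shows "growth_decomposition f (growth_set f {a..b} \<kappa>) \<kappa> x y"
proof (rule interval_local_to_global[OF \<open>\<kappa> > 0\<close>])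
  show "growth_decomposition f (growth_set f {a..b} \<kappa>) \<kappa> x z"
    if "x \<le> y" "y \<le> z" "growth_decomposition f (growth_set f {a..b} \<kappa>) \<kappa> x y"
      "growth_decomposition f (growth_set f {a..b} \<kappa>) \<kappa> y z" for x y z
    using growth_decomposition_trans[OF fmeasurableD[OF lmeasurable_growth_set[OF f]]] that \<open>\<kappa> > 0\<close>
    by (meson less_imp_le)
next
  show "growth_decomposition f (growth_set f {a..b} \<kappa>) \<kappa> x y"
    if "a \<le> x" "x \<le> y" "y \<le> b" "y - x < \<kappa>" for x y
    using f _ that by (rule growth_decomposition_short) (use \<open>\<kappa> > 0\<close> in simp)
qed (use assms in simp_all)

section \<open>Functions growing almost everywhere\<close>

lemma grows_ae_mono_on:
  fixes f :: "real \<Rightarrow> real"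
  assumes ac: "absolutely_continuous_on {a..b} f" and "grows_ae f a b"
  shows "mono_on {a..b} f"
proof (rule mono_onI)
  fix x y
  assume "x \<in> {a..b}" "y \<in> {a..b}" "x \<le> y"
  show "f x \<le> f y"
  proof (rule field_le_epsilon)
    fix \<epsilon> :: real
    assume "\<epsilon> > 0"
    then obtain d where "d > 0" and small: "\<And>n u v. nonoverlapping_intervals {a..b} n u v \<Longrightarrow>
        (\<Sum>i<n. v i - u i) < d \<Longrightarrow> (\<Sum>i<n. norm (f (v i) - f (u i))) < \<epsilon>"
      using absolutely_continuous_onE[OF ac] by blast
    obtain \<kappa> where "\<kappa> > 0" and \<kappa>: "measure lebesgue ({a..b} - growth_set f {a..b} \<kappa>) < d"
      using grows_aeE[OF \<open>grows_ae f a b\<close> \<open>d > 0\<close>] .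
    define E where "E = growth_set f {a..b} \<kappa>"
    have cont: "continuous_on {a..b} f"
      using ac by (rule absolutely_continuous_on_imp_continuous_on)
    have "growth_decomposition f E \<kappa> x y"
      unfolding E_def using \<open>x \<in> {a..b}\<close> \<open>y \<in> {a..b}\<close> \<open>x \<le> y\<close>
      by (intro growth_decomposition_interval[OF cont \<open>\<kappa> > 0\<close>]) auto
    then obtain n u v where I: "nonoverlapping_intervals {x..y} n u v"
      and len: "(\<Sum>i<n. v i - u i) \<le> measure lebesgue ({x..y} - E)"
      and inc: "\<kappa> * measure lebesgue (E \<inter> {x..y}) + (\<Sum>i<n. f (v i) - f (u i)) \<le> f y - f x"
      by (rule growth_decompositionE)
    have "measure lebesgue ({x..y} - E) \<le> measure lebesgue ({a..b} - E)"
      using lmeasurable_growth_set[OF cont] \<open>x \<in> {a..b}\<close> \<open>y \<in> {a..b}\<close> unfolding E_def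
      by (intro measure_mono_fmeasurable fmeasurable_Diff) (auto intro: fmeasurableD)
    with len \<kappa> have "(\<Sum>i<n. v i - u i) < d"
      unfolding E_def by linarith
    then have "(\<Sum>i<n. norm (f (v i) - f (u i))) < \<epsilon>"
      using \<open>x \<in> {a..b}\<close> \<open>y \<in> {a..b}\<close> by (intro small nonoverlapping_intervals_subset[OF I]) auto
    moreover have "- norm (f (v i) - f (u i)) \<le> f (v i) - f (u i)" for i
      by simp
    then have "- (\<Sum>i<n. norm (f (v i) - f (u i))) \<le> (\<Sum>i<n. f (v i) - f (u i))"
      by (simp add: sum_mono flip: sum_negf)
    moreover have "\<kappa> * measure lebesgue (E \<inter> {x..y}) \<ge> 0"
      using \<open>\<kappa> > 0\<close> by simp
    ultimately show "f x \<le> f y + \<epsilon>"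
      using inc by linarith
  qed
qed

lemma growth_set_measure_le_increment:
  fixes f :: "real \<Rightarrow> real"
  assumes f: "continuous_on {a..b} f" "mono_on {a..b} f" and "\<kappa> > 0" and "a \<le> x" "x \<le> y" "y \<le> b"
  shows "\<kappa> * measure lebesgue (growth_set f {a..b} \<kappa> \<inter> {x..y}) \<le> f y - f x"
proof -
  obtain n u v where I: "nonoverlapping_intervals {x..y} n u v"
    and "\<kappa> * measure lebesgue (growth_set f {a..b} \<kappa> \<inter> {x..y}) + (\<Sum>i<n. f (v i) - f (u i)) \<le> f y - f x"
    using growth_decomposition_interval[OF f(1) assms(3-6)] by (rule growth_decompositionE)
  moreover have "f (u i) \<le> f (v i)" if "i < n" for i
    using nonoverlapping_intervals_bounds[OF I that] assms(4-6) by (intro mono_onD[OF f(2)]) auto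
  then have "(\<Sum>i<n. f (v i) - f (u i)) \<ge> 0"
    by (intro sum_nonneg) simp
  ultimately show ?thesis
    by linarith
qed

lemma grows_ae_strict_mono_on:
  fixes f :: "real \<Rightarrow> real"
  assumes f: "continuous_on {a..b} f" "mono_on {a..b} f" and "grows_ae f a b"
  shows "strict_mono_on {a..b} f"
proof (rule strict_mono_onI)
  fix x y
  assume "x \<in> {a..b}" "y \<in> {a..b}" "x < y"
  obtain \<kappa> where "\<kappa> > 0" and \<kappa>: "measure lebesgue ({a..b} - growth_set f {a..b} \<kappa>) < y - x"
    using grows_aeE[OF \<open>grows_ae f a b\<close>] \<open>x < y\<close> by (metis diff_gt_0_iff_gt)
  define E where "E = growth_set f {a..b} \<kappa>"
  have E: "E \<in> sets lebesgue"
    unfolding E_def using f(1) by (intro fmeasurableD lmeasurable_growth_set)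
  have "measure lebesgue ({x..y} - E) \<le> measure lebesgue ({a..b} - E)"
    using E \<open>x \<in> {a..b}\<close> \<open>y \<in> {a..b}\<close> by (intro measure_mono_fmeasurable fmeasurable_Diff) auto
  then have "measure lebesgue (E \<inter> {x..y}) > 0"
    using \<kappa> measure_Icc_Diff[OF E] \<open>x < y\<close> unfolding E_def by fastforce
  moreover have "\<kappa> * measure lebesgue (E \<inter> {x..y}) \<le> f y - f x"
    unfolding E_def using f \<open>\<kappa> > 0\<close> \<open>x \<in> {a..b}\<close> \<open>y \<in> {a..b}\<close> \<open>x < y\<close>
    by (intro growth_set_measure_le_increment) auto
  ultimately show "f x < f y"
    using mult_pos_pos[OF \<open>\<kappa> > 0\<close>] by fastforce
qed

lemma grows_ae_right_inverse_absolutely_continuous: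
  fixes f g :: "real \<Rightarrow> real"
  assumes f: "continuous_on {a..b} f" "mono_on {a..b} f" "grows_ae f a b"
    and g: "mono_on {c..d} g" "g ` {c..d} \<subseteq> {a..b}" and fg: "\<And>t. t \<in> {c..d} \<Longrightarrow> f (g t) = t"
  shows "absolutely_continuous_on {c..d} g"
  unfolding absolutely_continuous_on_iff
proof (intro allI impI)
  fix \<epsilon> :: real
  assume "\<epsilon> > 0"
  then obtain \<kappa> where "\<kappa> > 0" and \<kappa>: "measure lebesgue ({a..b} - growth_set f {a..b} \<kappa>) < \<epsilon> / 2"
    using grows_aeE[OF f(3), of "\<epsilon> / 2"] by auto
  define E where "E = growth_set f {a..b} \<kappa>"
  have E: "E \<in> sets lebesgue"
    unfolding E_def using f(1) by (intro fmeasurableD lmeasurable_growth_set)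
  have "(\<Sum>i<n. norm (g (v i) - g (u i))) < \<epsilon>"
    if I: "nonoverlapping_intervals {c..d} n u v" and short: "(\<Sum>i<n. v i - u i) < \<kappa> * (\<epsilon> / 2)" for n u v
  proof -
    have J: "nonoverlapping_intervals {a..b} n (g \<circ> u) (g \<circ> v)"
      by (rule nonoverlapping_intervals_mono_image[OF I g])
    \<comment> \<open>The part of [g u, g v] inside E is controlled by the growth of f, the rest by the measure of the complement of E.\<close>
    have split: "norm (g (v i) - g (u i)) =
        measure lebesgue (E \<inter> {g (u i)..g (v i)}) + measure lebesgue ({g (u i)..g (v i)} - E)" if "i < n" for i
      using measure_Icc_Diff[OF E] nonoverlapping_intervals_bounds[OF J that] by simp
    have "\<kappa> * measure lebesgue (E \<inter> {g (u i)..g (v i)}) \<le> v i - u i" if "i < n" for i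
      using growth_set_measure_le_increment[OF f(1,2) \<open>\<kappa> > 0\<close>
          nonoverlapping_intervals_bounds[OF J that, unfolded comp_def]]
        fg[OF nonoverlapping_intervals_mem(1)[OF I that]] fg[OF nonoverlapping_intervals_mem(2)[OF I that]]
      unfolding E_def by simp
    then have "\<kappa> * (\<Sum>i<n. measure lebesgue (E \<inter> {g (u i)..g (v i)})) \<le> (\<Sum>i<n. v i - u i)"
      unfolding sum_distrib_left by (intro sum_mono) simp
    then have "\<kappa> * (\<Sum>i<n. measure lebesgue (E \<inter> {g (u i)..g (v i)})) < \<kappa> * (\<epsilon> / 2)"
      using short by linarith
    then have "(\<Sum>i<n. measure lebesgue (E \<inter> {g (u i)..g (v i)})) < \<epsilon> / 2"
      using \<open>\<kappa> > 0\<close> by simp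
    moreover have "(\<Sum>i<n. measure lebesgue ({g (u i)..g (v i)} - E)) < \<epsilon> / 2"
      using sum_measure_nonoverlapping_intervals_Diff[OF J E] \<kappa> unfolding E_def by simp
    ultimately show ?thesis
      using split by (simp add: sum.distrib)
  qed
  with \<open>\<kappa> > 0\<close> \<open>\<epsilon> > 0\<close> show "\<exists>\<delta>>0. \<forall>n u v. nonoverlapping_intervals {c..d} n u v \<and> (\<Sum>i<n. v i - u i) < \<delta> \<longrightarrow>
      (\<Sum>i<n. norm (g (v i) - g (u i))) < \<epsilon>"
    by (intro exI[of _ "\<kappa> * (\<epsilon> / 2)"]) auto
qed

lemma mono_on_continuous_image_Icc:
  fixes f :: "real \<Rightarrow> real"
  assumes "continuous_on {a..b} f" and "mono_on {a..b} f" and "a \<le> b"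
  shows "f ` {a..b} = {f a..f b}"
proof
  show "f ` {a..b} \<subseteq> {f a..f b}"
    using assms(2,3) by (auto intro!: mono_onD[OF assms(2)])
  show "{f a..f b} \<subseteq> f ` {a..b}"
    using IVT'[of f a _ b] assms(1,3) by fastforce
qed

lemma strict_mono_on_inv_into:
  fixes f :: "'a::linorder \<Rightarrow> 'b::linorder"
  assumes "strict_mono_on A f"
  shows "strict_mono_on (f ` A) (inv_into A f)"
proof (rule strict_mono_onI)
  fix r s
  assume "r \<in> f ` A" "s \<in> f ` A" "r < s"
  then obtain x y where "x \<in> A" "y \<in> A" "r = f x" "s = f y"
    by blast
  with \<open>r < s\<close> assms show "inv_into A f r < inv_into A f s"
    by (simp add: strict_mono_on_imp_inj_on strict_mono_on_less)
qed

lemma absolutely_continuous_inverse_if_pos_deriv_ae: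
  fixes f :: "real \<Rightarrow> real"
  assumes ac: "absolutely_continuous_on {a..b} f" and "a \<le> b" and "negligible N"
    and deriv: "\<And>s. s \<in> {a..b} - N \<Longrightarrow> \<exists>D>0. (f has_real_derivative D) (at s within {a..b})"
  shows "strict_mono_on {a..b} f" and "f ` {a..b} = {f a..f b}"
    and "absolutely_continuous_on {f a..f b} (inv_into {a..b} f)"
proof -
  have cont: "continuous_on {a..b} f"
    using ac by (rule absolutely_continuous_on_imp_continuous_on)
  have "grows_ae f a b"
    using cont \<open>negligible N\<close> deriv by (rule grows_ae_if_pos_deriv_ae)
  then have mono: "mono_on {a..b} f"
    using ac by (intro grows_ae_mono_on)
  show strict: "strict_mono_on {a..b} f"
    using cont mono \<open>grows_ae f a b\<close> by (rule grows_ae_strict_mono_on)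
  show image: "f ` {a..b} = {f a..f b}"
    using cont mono \<open>a \<le> b\<close> by (rule mono_on_continuous_image_Icc)
  show "absolutely_continuous_on {f a..f b} (inv_into {a..b} f)"
  proof (rule grows_ae_right_inverse_absolutely_continuous[OF cont mono \<open>grows_ae f a b\<close>])
    show "mono_on {f a..f b} (inv_into {a..b} f)"
      using strict_mono_on_inv_into[OF strict] image by (simp add: strict_mono_on_imp_mono_on)
    show "inv_into {a..b} f ` {f a..f b} \<subseteq> {a..b}"
      using image by (auto intro: inv_into_into)
    show "f (inv_into {a..b} f t) = t" if "t \<in> {f a..f b}" for t
      using that image by (simp add: f_inv_into_f)
  qed
qed

section \<open>Reparametrisation by the time coordinate\<close>

lemma has_vector_derivative_fst:
  assumes "(h has_vector_derivative v) F"
  shows "((\<lambda>x. fst (h x)) has_real_derivative fst v) F"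
proof -
  have "((\<lambda>x. fst (h x)) has_derivative (\<lambda>x. fst (x *\<^sub>R v))) F"
    using assms unfolding has_vector_derivative_def by (rule has_derivative_fst)
  moreover have "(\<lambda>x. fst (x *\<^sub>R v)) = (*) (fst v)"
    by (auto simp: fun_eq_iff)
  ultimately show ?thesis
    by (simp add: has_field_derivative_def)
qed

lemma absolutely_continuous_on_fst:
  assumes "absolutely_continuous_on S h"
  shows "absolutely_continuous_on S (\<lambda>s. fst (h s))"
  using assms
proof (rule absolutely_continuous_on_dominated)
  show "norm (fst (h x) - fst (h y)) \<le> norm (h x - h y)" for x y
    using norm_fst_le[of "fst (h x - h y)" "snd (h x - h y)", unfolded prod.collapse] by simp
qed

lemma exists_reparametrisation_by_fst:
  fixes c :: "real \<Rightarrow> real \<times> 'b::real_normed_vector"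
  assumes ac: "absolutely_continuous_on {a..b} c" and "a \<le> b" and "negligible N"
    and deriv: "\<And>s. s \<in> {a..b} - N \<Longrightarrow> \<exists>v. (c has_vector_derivative v) (at s within {a..b}) \<and> fst v > 0"
  shows "\<exists>c' d \<phi>. c' \<le> d \<and> strict_mono_on {c'..d} \<phi> \<and> \<phi> ` {c'..d} = {a..b} \<and>
           absolutely_continuous_on {c'..d} \<phi> \<and> (\<forall>t\<in>{c'..d}. c (\<phi> t) = (t, snd (c (\<phi> t))))"
proof -
  define f where "f s = fst (c s)" for s
  have "\<exists>D>0. (f has_real_derivative D) (at s within {a..b})" if "s \<in> {a..b} - N" for s
    using deriv[OF that] unfolding f_def by (blast dest: has_vector_derivative_fst)
  then have inverse: "strict_mono_on {a..b} f" "f ` {a..b} = {f a..f b}"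
      "absolutely_continuous_on {f a..f b} (inv_into {a..b} f)"
    using absolutely_continuous_inverse_if_pos_deriv_ae[OF absolutely_continuous_on_fst[OF ac]]
      \<open>a \<le> b\<close> \<open>negligible N\<close> unfolding f_def by blast+
  have "strict_mono_on {f a..f b} (inv_into {a..b} f)"
    using strict_mono_on_inv_into[OF inverse(1)] inverse(2) by simp
  moreover have "inv_into {a..b} f ` {f a..f b} = {a..b}"
    using inv_into_image_cancel[OF strict_mono_on_imp_inj_on[OF inverse(1)] order_refl] inverse(2) by simp
  moreover have "c (inv_into {a..b} f t) = (t, snd (c (inv_into {a..b} f t)))" if "t \<in> {f a..f b}" for t
    using f_inv_into_f[of t f "{a..b}"] that inverse(2) unfolding f_def by (metis prod.collapse)
  moreover have "f a \<le> f b"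
    using \<open>a \<le> b\<close> inverse(1) by (simp add: strict_mono_on_less_eq)
  ultimately show ?thesis
    using inverse(3) by blast
qed

theorem lemma2p8:
  fixes U :: "'m::t2_space set"
    and \<phi> :: "'m \<Rightarrow> real \<times> (real ^ ('n::finite))"
    and G :: "real \<times> (real ^ ('n::finite)) \<Rightarrow> real \<times> (real ^ 'n) \<Rightarrow> real \<times> (real ^ 'n) \<Rightarrow> real"
    and T :: "real \<times> (real ^ ('n::finite)) \<Rightarrow> real \<times> (real ^ 'n)"
    and p :: 'm and L :: "real set" and V :: "(real ^ ('n::finite)) set"
    and \<gamma> :: "real \<Rightarrow> 'm" and a b :: real
  assumes metric_lorentz: "\<forall>q\<in>L \<times> V. lorentzian_form (G q)"
    and metric_cont: "\<forall>X Y. continuous_on (L \<times> V) (\<lambda>q. G q X Y)"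
    and time_orient: "continuous_on (L \<times> V) T" "\<forall>q\<in>L \<times> V. G q (T q) (T q) < 0"
    and dt_future: "\<forall>q\<in>L \<times> V. G q (T q) (1, 0) < 0"
    and cyl: "cylindrical_chart U \<phi> G p L V"
    and ab: "a \<le> b"
    and in_U: "\<gamma> ` {a..b} \<subseteq> U"
    and ac: "absolutely_continuous_on {a..b} (\<phi> \<circ> \<gamma>)"
    and causal: "\<exists>N. N \<in> null_sets lborel \<and>
       (\<forall>s\<in>{a..b} - N. \<exists>v. ((\<phi> \<circ> \<gamma>) has_vector_derivative v) (at s within {a..b}) \<and>
          future_causal (G (\<phi> (\<gamma> s))) (T (\<phi> (\<gamma> s))) v)"
  shows "\<exists>c d \<phi>'. c \<le> d \<and> strict_mono_on {c..d} \<phi>' \<and> \<phi>' ` {c..d} = {a..b} \<and>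
           absolutely_continuous_on {c..d} \<phi>' \<and>
           (\<forall>t\<in>{c..d}. \<phi> (\<gamma> (\<phi>' t)) = (t, snd (\<phi> (\<gamma> (\<phi>' t)))))"
proof -
  have chart: "\<phi> ` U = L \<times> V"
    using cyl unfolding cylindrical_chart_def by (metis homeomorphism_image1)
  obtain N where "N \<in> null_sets lborel" and N: "\<forall>s\<in>{a..b} - N. \<exists>v.
      ((\<phi> \<circ> \<gamma>) has_vector_derivative v) (at s within {a..b}) \<and> future_causal (G (\<phi> (\<gamma> s))) (T (\<phi> (\<gamma> s))) v"
    using causal by blast
  have "\<exists>v. ((\<phi> \<circ> \<gamma>) has_vector_derivative v) (at s within {a..b}) \<and> fst v > 0" if s: "s \<in> {a..b} - N" for s
  proof -
    obtain v where "((\<phi> \<circ> \<gamma>) has_vector_derivative v) (at s within {a..b})"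
      and causal_v: "future_causal (G (\<phi> (\<gamma> s))) (T (\<phi> (\<gamma> s))) v"
      using N s by blast
    moreover have q: "\<phi> (\<gamma> s) \<in> L \<times> V"
      using s in_U chart by blast
    then have "fst v > 0"
      by (rule cylindrical_chart_future_causal_fst_pos[OF cyl _ metric_lorentz[rule_format, OF q]
            time_orient(2)[rule_format, OF q] dt_future[rule_format, OF q] causal_v])
    ultimately show ?thesis
      by blast
  qed
  moreover have "negligible N"
    using \<open>N \<in> null_sets lborel\<close> by (simp add: negligible_iff_null_sets null_sets_completionI)
  ultimately show ?thesis
    using exists_reparametrisation_by_fst[OF ac ab] unfolding comp_def by blast
qed

end
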